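(* Let $\mathcal{C}$ be an $[n,k]$ MDS code over $\mathbb{F}_q$ with generator matrix $\mathbf{G}\in\mathbb{F}_q^{k\times n}$, let $\mathbf{X}$ be uniformly distributed over $\mathbb{F}_q^{\alpha m\times k}$ and $\mathbf{Y}=\mathbf{X}\mathbf{G}\in\mathbb{F}_q^{\alpha m\times n}$. Let $\mathbf{q}\in\mathbb{F}_q^{\alpha m\times\beta n}$ be such that for every $\mathcal{T}\subseteq[n]$ with $|\mathcal{T}|=t$ and every nonempty $\mathcal{F}\subseteq[m]$, $$\mathrm{rank}(\mathbf{q}[\psi_\alpha(\mathcal{F}),\psi_\beta(\mathcal{T})])=|\mathrm{colsupp}(\mathbf{q}[\psi_\alpha(\mathcal{F}),\psi_\beta(\mathcal{T})])|.$$ Then for every nonempty $\mathcal{F}\subseteq[m]$ and every $\mathcal{N}\subseteq[n]$ with $|\mathcal{N}|=k+t-1$, $$H\Big(\sum_{l\in\psi_\alpha(\mathcal{F})}(\mathbf{Y}[l,\mathcal{N}]\otimes\mathbf{1}_\beta)\star\mathbf{q}[l,\psi_\beta(\mathcal{N})]\Big)=|\mathrm{colsupp}(\mathbf{q}[\psi_\alpha(\mathcal{F}),\psi_\beta(\mathcal{N})])|,$$ with entropy measured in $q$-ary units.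
   Context: $\psi_\beta(\mathcal{I})=\bigcup_{i\in\mathcal{I}}\{(i-1)\beta+1,\dots,i\beta\}$; $\mathbf{W}[\mathcal{I},\mathcal{J}]$ is the submatrix with rows $\mathcal{I}$ and columns $\mathcal{J}$ ($l$ alone denotes the single row $l$); $\mathrm{colsupp}(\mathbf{W})$ is the set of indices of nonzero columns. $\mathbf{1}_\beta$ is the all-one row vector of length $\beta$, $\otimes$ the Kronecker product (so $\mathbf{Y}[l,\mathcal{N}]\otimes\mathbf{1}_\beta$ repeats each entry $\beta$ times), and $\star$ the entrywise (Hadamard) product. *)

theory Defs
  imports "Jordan_Normal_Form.DL_Rank_Submatrix"
begin

(* Conventions: all indices are 0-based; [n] is {0..<n}. *)

definition psi :: "nat \<Rightarrow> nat set \<Rightarrow> nat set" where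
  "psi \<beta> I = (\<Union>i\<in>I. {i * \<beta> ..< (i + 1) * \<beta>})"

definition mat_rank :: "'a::field mat \<Rightarrow> nat" where
  "mat_rank W = vec_space.rank (dim_row W) W"

definition colsupp :: "'a::zero mat \<Rightarrow> nat set" where
  "colsupp W = {j. j < dim_col W \<and> col W j \<noteq> 0\<^sub>v (dim_row W)}"

definition hweight :: "'a::zero vec \<Rightarrow> nat" where
  "hweight c = card {i. i < dim_vec c \<and> c $ i \<noteq> 0}"

definition code_of :: "'a::field mat \<Rightarrow> 'a vec set" where
  "code_of G = {transpose_mat G *\<^sub>v u | u. u \<in> carrier_vec (dim_row G)}"

definition min_distance :: "'a::field mat \<Rightarrow> nat" where
  "min_distance G = Min {hweight c | c. c \<in> code_of G \<and> c \<noteq> 0\<^sub>v (dim_col G)}"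

definition mds_generator :: "'a::field mat \<Rightarrow> nat \<Rightarrow> nat \<Rightarrow> bool" where
  "mds_generator G n k \<longleftrightarrow> G \<in> carrier_mat k n \<and> mat_rank G = k
      \<and> min_distance G = n - k + 1"

definition kron_ones :: "'a vec \<Rightarrow> nat \<Rightarrow> 'a vec" where
  "kron_ones v \<beta> = vec (dim_vec v * \<beta>) (\<lambda>c. v $ (c div \<beta>))"

definition hadamard :: "'a::times vec \<Rightarrow> 'a vec \<Rightarrow> 'a vec" where
  "hadamard v w = vec (dim_vec v) (\<lambda>i. v $ i * w $ i)"

definition row_sub :: "'a mat \<Rightarrow> nat \<Rightarrow> nat set \<Rightarrow> 'a vec" where
  "row_sub W l J = row (submatrix W {l} J) 0"

definition prob_unif :: "'x set \<Rightarrow> ('x \<Rightarrow> 'z) \<Rightarrow> 'z \<Rightarrow> real" where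
  "prob_unif A f z = real (card {x\<in>A. f x = z}) / real (card A)"

definition entropy_unif :: "real \<Rightarrow> 'x set \<Rightarrow> ('x \<Rightarrow> 'z) \<Rightarrow> real" where
  "entropy_unif b A f = - (\<Sum>z\<in>f ` A. prob_unif A f z * log b (prob_unif A f z))"

definition answer ::
  "'a::field mat \<Rightarrow> 'a mat \<Rightarrow> 'a mat \<Rightarrow> nat \<Rightarrow> nat \<Rightarrow> nat set \<Rightarrow> nat set \<Rightarrow> 'a vec" where
  "answer G Q X \<alpha> \<beta> F N =
     (let Y = X * G in
      vec (\<beta> * card N)
        (\<lambda>c. \<Sum>l\<in>psi \<alpha> F. (hadamard (kron_ones (row_sub Y l N) \<beta>) (row_sub Q l (psi \<beta> N))) $ c))"

end

theory Submission
  imports Defs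
begin

(* The answer is an F_q-linear function of X, so under the uniform distribution all its fibres
   have the same size and its entropy in q-ary units is log_q of the size of its image.  Every
   answer vanishes at the positions c where column c of q[psi_alpha(F), psi_beta(N)] is zero;
   conversely every vector supported on the remaining positions is attained, because the
   corresponding linear functionals of X are linearly independent.  For the independence, take a
   vanishing combination and one of its positions, lying in block j0 of N.  Complete j0 to a set
   T of t blocks of N; the other k - 1 blocks R = N - T are the zeros of a nonzero codeword, which
   by the MDS property is nonzero on all of T.  Weighting the combination by this codeword kills
   every position outside psi_beta(T) and leaves a vanishing combination of the nonzero columns of
   q[psi_alpha(F), psi_beta(T)], which the rank hypothesis forbids. *)

section \<open>Blocks of indices\<close>

lemma mem_block_iff: "(a::nat) \<in> {i * \<beta>..<(i + 1) * \<beta>} \<longleftrightarrow> 0 < \<beta> \<and> a div \<beta> = i"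
proof
  assume "a \<in> {i * \<beta>..<(i + 1) * \<beta>}"
  then have "\<beta> * i \<le> a" "a < \<beta> * Suc i" by (simp_all add: mult.commute)
  then show "0 < \<beta> \<and> a div \<beta> = i"
    using div_nat_eqI[of \<beta> i a] by (cases "\<beta> = 0") auto
next
  assume "0 < \<beta> \<and> a div \<beta> = i"
  then show "a \<in> {i * \<beta>..<(i + 1) * \<beta>}"
    using dividend_less_div_times[of \<beta> a] by auto
qed

lemma mem_psi_iff: "a \<in> psi \<beta> N \<longleftrightarrow> 0 < \<beta> \<and> a div \<beta> \<in> N"
  unfolding psi_def UN_iff mem_block_iff by auto

lemma psi_subset_lessThan: "N \<subseteq> {0..<n} \<Longrightarrow> psi \<beta> N \<subseteq> {..<\<beta> * n}"
  by (auto simp: mem_psi_iff div_less_iff_less_mult mult.commute)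

lemma finite_psi: "finite N \<Longrightarrow> finite (psi \<beta> N)"
  unfolding psi_def by auto

lemma card_psi:
  assumes "finite N"
  shows "card (psi \<beta> N) = \<beta> * card N"
proof -
  have disj: "{i * \<beta>..<(i + 1) * \<beta>} \<inter> {j * \<beta>..<(j + 1) * \<beta>} = {}" if "i \<noteq> j" for i j
    unfolding disjoint_iff mem_block_iff using that by blast
  have "card (psi \<beta> N) = (\<Sum>i\<in>N. card {i * \<beta>..<(i + 1) * \<beta>})"
    unfolding psi_def by (rule card_UN_disjoint[OF assms], simp, use disj in blast)
  then show ?thesis by simp
qed

lemma psi_below_block:
  assumes "j \<in> N" "r < \<beta>"
  shows "{a \<in> psi \<beta> N. a < j * \<beta> + r} = psi \<beta> {x \<in> N. x < j} \<union> {j * \<beta>..<j * \<beta> + r}"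
proof -
  have "a div \<beta> < j" if "a < j * \<beta>" for a
    using that by (simp add: less_mult_imp_div_less)
  moreover have "a div \<beta> = j" if "a \<in> {j * \<beta>..<j * \<beta> + r}" for a
    using that assms(2) mem_block_iff[of a j \<beta>] by simp
  moreover have "a < j * \<beta> + r" if "0 < \<beta>" "a div \<beta> < j" for a
    using that by (simp add: div_less_iff_less_mult trans_less_add1)
  ultimately show ?thesis
    using assms by (auto simp: mem_psi_iff)
qed

lemma pick_psi:
  assumes "finite N" and c: "c < \<beta> * card N"
  shows "pick (psi \<beta> N) c = pick N (c div \<beta>) * \<beta> + c mod \<beta>"
proof -
  have \<beta>: "0 < \<beta>" using c by (cases \<beta>) auto
  define j where "j = pick N (c div \<beta>)"
  have "c div \<beta> < card N" using c \<beta> by (simp add: div_less_iff_less_mult mult.commute)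
  then have j: "j \<in> N" "card {x \<in> N. x < j} = c div \<beta>"
    unfolding j_def by (simp_all add: pick_in_set card_pick)
  have "psi \<beta> {x \<in> N. x < j} \<inter> {j * \<beta>..<j * \<beta> + c mod \<beta>} = {}"
    by (auto simp: mem_psi_iff div_less_iff_less_mult)
  then have "card {a \<in> psi \<beta> N. a < j * \<beta> + c mod \<beta>} = \<beta> * (c div \<beta>) + c mod \<beta>"
    using assms(1) j \<beta> by (simp add: psi_below_block card_Un_disjoint finite_psi card_psi)
  moreover have "j * \<beta> + c mod \<beta> \<in> psi \<beta> N"
    using j \<beta> by (simp add: mem_psi_iff)
  ultimately show ?thesis
    unfolding j_def by (metis pick_card_in_set div_mult_mod_eq mult.commute)
qed

lemma bij_betw_pick: "finite S \<Longrightarrow> bij_betw (pick S) {..<card S} S"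
proof -
  assume "finite S"
  moreover have "inj_on (pick S) {..<card S}"
    by (rule inj_onI) (metis lessThan_iff nat_neq_iff pick_mono)
  moreover have "pick S ` {..<card S} \<subseteq> S"
    using pick_in_set by auto
  ultimately show ?thesis
    unfolding bij_betw_def by (metis card_image card_lessThan card_subset_eq)
qed

lemma bij_betw_pick_Collect:
  assumes "finite J"
  shows "bij_betw (pick J) {c. c < card J \<and> P (pick J c)} {a \<in> J. P a}"
proof -
  have "pick J ` {c. c < card J \<and> P (pick J c)} = {a \<in> J. P a}"
    using bij_betw_pick[OF assms] unfolding bij_betw_def by auto
  moreover have "inj_on (pick J) {c. c < card J \<and> P (pick J c)}"
    using bij_betw_pick[OF assms] unfolding bij_betw_def by (rule inj_on_subset[OF conjunct1]) auto
  ultimately show ?thesis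
    unfolding bij_betw_def by blast
qed

lemma ex_subset_card_containing:
  assumes "finite N" "j \<in> N" "1 \<le> t" "t \<le> card N"
  obtains T where "T \<subseteq> N" "j \<in> T" "card T = t"
proof -
  have "t - 1 \<le> card (N - {j})"
    using assms by (simp add: card_Diff_singleton)
  then obtain T0 where T0: "T0 \<subseteq> N - {j}" "card T0 = t - 1" "finite T0"
    by (rule obtain_subset_with_card_n)
  have "insert j T0 \<subseteq> N"
    using T0(1) assms(2) by blast
  moreover have "card (insert j T0) = t"
    using T0 assms(3) by (simp add: subset_Diff_insert)
  ultimately show ?thesis
    by (intro that[of "insert j T0"]) simp_all
qed

definition nonzero_cols :: "'a::zero mat \<Rightarrow> nat set \<Rightarrow> nat set \<Rightarrow> nat set" where
  "nonzero_cols Q L J = {a \<in> J. \<exists>l\<in>L. Q $$ (l, a) \<noteq> 0}"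

lemma
  assumes "Q \<in> carrier_mat nr nc" "L \<subseteq> {..<nr}" "J \<subseteq> {..<nc}"
  shows submatrix_carrier_mat: "submatrix Q L J \<in> carrier_mat (card L) (card J)"
    and submatrix_index_pick:
      "\<And>r c. r < card L \<Longrightarrow> c < card J \<Longrightarrow> submatrix Q L J $$ (r, c) = Q $$ (pick L r, pick J c)"
proof -
  have rows: "{i. i < nr \<and> i \<in> L} = L" and cols: "{j. j < nc \<and> j \<in> J} = J"
    using assms by auto
  show "submatrix Q L J \<in> carrier_mat (card L) (card J)"
    unfolding carrier_mat_def using assms(1) rows cols by (simp add: dim_submatrix)
  show "submatrix Q L J $$ (r, c) = Q $$ (pick L r, pick J c)" if "r < card L" "c < card J" for r c
    using submatrix_index[of r Q L c J] assms(1) rows cols that by simp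
qed

lemma colsupp_submatrix:
  assumes Q: "Q \<in> carrier_mat nr nc" and L: "L \<subseteq> {..<nr}" and J: "J \<subseteq> {..<nc}"
  shows "colsupp (submatrix Q L J) = {c. c < card J \<and> pick J c \<in> nonzero_cols Q L J}"
proof -
  have "pick L ` {..<card L} = L"
    using bij_betw_pick[of L] L finite_subset by (auto simp: bij_betw_def)
  then have L_pick: "(\<exists>r<card L. P (pick L r)) \<longleftrightarrow> (\<exists>l\<in>L. P l)" for P
    by (metis (no_types, lifting) imageE imageI lessThan_iff)
  note carrier = submatrix_carrier_mat[OF assms]
  have "c \<in> colsupp (submatrix Q L J) \<longleftrightarrow> c < card J \<and> pick J c \<in> nonzero_cols Q L J" for c
  proof (cases "c < card J")
    case True
    then have "c \<in> colsupp (submatrix Q L J) \<longleftrightarrow> (\<exists>r<card L. Q $$ (pick L r, pick J c) \<noteq> 0)"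
      using carrier submatrix_index_pick[OF assms] by (auto simp: colsupp_def vec_eq_iff)
    also have "\<dots> \<longleftrightarrow> (\<exists>l\<in>L. Q $$ (l, pick J c) \<noteq> 0)"
      by (rule L_pick)
    finally show ?thesis
      using True by (simp add: nonzero_cols_def pick_in_set)
  next
    case False
    then show ?thesis using carrier by (simp add: colsupp_def)
  qed
  then show ?thesis by blast
qed

lemma row_sub_index:
  assumes "l < dim_row W" "J \<subseteq> {..<dim_col W}" "c < card J"
  shows "row_sub W l J $ c = W $$ (l, pick J c)"
proof -
  have "pick {l} 0 = l"
    by (simp add: Least_equality)
  moreover have "submatrix W {l} J \<in> carrier_mat (card {l}) (card J)"
    using assms by (intro submatrix_carrier_mat) auto
  ultimately show ?thesis
    using assms submatrix_index_pick[of W "dim_row W" "dim_col W" "{l}" J 0 c]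
    unfolding row_sub_def by simp
qed

lemma dim_row_sub: "J \<subseteq> {..<dim_col W} \<Longrightarrow> l < dim_row W \<Longrightarrow> dim_vec (row_sub W l J) = card J"
  unfolding row_sub_def using submatrix_carrier_mat[of W "dim_row W" "dim_col W" "{l}" J] by simp

lemma hadamard_kron_ones_index:
  "c < dim_vec v * \<beta> \<Longrightarrow> hadamard (kron_ones v \<beta>) w $ c = v $ (c div \<beta>) * w $ c"
  by (simp add: hadamard_def kron_ones_def)

section \<open>Solving linear systems\<close>

lemma lin_indep_eliminate_pivot:
  fixes r :: "'i \<Rightarrow> 'd \<Rightarrow> 'a::field"
  assumes indep: "\<And>\<gamma>. \<forall>d\<in>D. (\<Sum>i\<in>insert s I. \<gamma> i * r i d) = 0 \<Longrightarrow> \<forall>i\<in>insert s I. \<gamma> i = 0"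
    and I: "finite I" "s \<notin> I" and pivot: "r s p \<noteq> 0"
    and dep: "\<forall>d\<in>D. (\<Sum>i\<in>I. \<gamma> i * (r i d - r i p / r s p * r s d)) = 0"
  shows "\<forall>i\<in>I. \<gamma> i = 0"
proof -
  define \<gamma>' where "\<gamma>' = \<gamma>(s := - (\<Sum>i\<in>I. \<gamma> i * r i p) / r s p)"
  have "(\<Sum>i\<in>insert s I. \<gamma>' i * r i d) = (\<Sum>i\<in>I. \<gamma> i * (r i d - r i p / r s p * r s d))" for d
  proof -
    have "(\<Sum>i\<in>insert s I. \<gamma>' i * r i d) = \<gamma>' s * r s d + (\<Sum>i\<in>I. \<gamma> i * r i d)"
      using I unfolding \<gamma>'_def by (auto intro!: sum.cong)
    also have "\<dots> = (\<Sum>i\<in>I. \<gamma> i * r i d) - (\<Sum>i\<in>I. \<gamma> i * r i p) / r s p * r s d"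
      unfolding \<gamma>'_def by simp
    also have "\<dots> = (\<Sum>i\<in>I. \<gamma> i * (r i d - r i p / r s p * r s d))"
      by (simp add: right_diff_distrib sum_subtractf sum_divide_distrib sum_distrib_right mult.assoc)
    finally show ?thesis .
  qed
  then have "\<forall>i\<in>insert s I. \<gamma>' i = 0"
    using dep by (intro indep) simp
  then show ?thesis
    using I(2) by (metis \<gamma>'_def fun_upd_other insertCI)
qed

lemma lin_indep_row_nonzero:
  fixes r :: "'i \<Rightarrow> 'd \<Rightarrow> 'a::field"
  assumes "finite I" "s \<in> I"
    and indep: "\<And>\<gamma>. \<forall>d\<in>D. (\<Sum>i\<in>I. \<gamma> i * r i d) = 0 \<Longrightarrow> \<forall>i\<in>I. \<gamma> i = 0"
  shows "\<exists>p\<in>D. r s p \<noteq> 0"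
proof (rule ccontr)
  assume "\<not> ?thesis"
  then have "\<forall>d\<in>D. (\<Sum>i\<in>I. (if i = s then 1 else 0) * r i d) = 0"
    using assms(1,2) by (simp add: if_distrib cong: if_cong)
  from indep[OF this] assms(2) have "(1::'a) = 0"
    by force
  then show False by simp
qed

(* Gaussian elimination: solve the system reduced by the pivot p of row s,
   then correct the solution at p to satisfy row s as well. *)
lemma linear_system_solvable:
  fixes r :: "'i \<Rightarrow> 'd \<Rightarrow> 'a::field"
  assumes "finite I" "finite D"
    and "\<And>\<gamma>. \<forall>d\<in>D. (\<Sum>i\<in>I. \<gamma> i * r i d) = 0 \<Longrightarrow> \<forall>i\<in>I. \<gamma> i = 0"
  shows "\<exists>x. \<forall>i\<in>I. (\<Sum>d\<in>D. r i d * x d) = v i"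
  using assms(1,3)
proof (induction I arbitrary: r v rule: finite_induct)
  case empty
  then show ?case by simp
next
  case (insert s I)
  obtain p where p: "p \<in> D" "r s p \<noteq> 0"
    using lin_indep_row_nonzero[OF _ insertI1 insert.prems] insert.hyps(1) by blast
  define c where "c i = r i p / r s p" for i
  have "\<exists>x'. \<forall>i\<in>I. (\<Sum>d\<in>D. (r i d - c i * r s d) * x' d) = v i - c i * v s"
    unfolding c_def
    by (rule insert.IH, rule lin_indep_eliminate_pivot[where r = r and p = p, OF insert.prems insert.hyps p(2)])
  then obtain x' where x': "\<forall>i\<in>I. (\<Sum>d\<in>D. (r i d - c i * r s d) * x' d) = v i - c i * v s" ..
  define S where "S i = (\<Sum>d\<in>D. r i d * x' d)" for i
  define x where "x d = x' d + (if d = p then (v s - S s) / r s p else 0)" for d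
  have sum_x: "(\<Sum>d\<in>D. r i d * x d) = S i + c i * (v s - S s)" for i
  proof -
    have "(\<Sum>d\<in>D. r i d * (if d = p then (v s - S s) / r s p else 0))
        = (\<Sum>d\<in>D. if d = p then r i d * ((v s - S s) / r s p) else 0)"
      by (rule sum.cong) auto
    then show ?thesis
      using assms(2) p(1) by (simp add: x_def S_def c_def distrib_left sum.distrib)
  qed
  have "(\<Sum>d\<in>D. r i d * x d) = v i" if "i \<in> insert s I" for i
  proof (cases "i = s")
    case True
    then show ?thesis using p(2) by (simp add: sum_x c_def)
  next
    case False
    then have "S i - c i * S s = v i - c i * v s"
      using that x' unfolding S_def by (simp add: left_diff_distrib sum_subtractf sum_distrib_left mult.assoc)
    then show ?thesis
      unfolding sum_x by (simp add: algebra_simps eq_diff_eq)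
  qed
  then show ?case by blast
qed

section \<open>Rank and independent columns\<close>

lemma (in vec_space) lin_indpt_cols_card_rank:
  assumes "A \<in> carrier_mat n nc"
  obtains S where "S \<subseteq> set (cols A)" "lin_indpt S" "card S = rank A"
proof -
  obtain S where S: "maximal S (\<lambda>T. T \<subseteq> set (cols A) \<and> lin_indpt T)"
    using maximal_exists[of "\<lambda>T. T \<subseteq> set (cols A) \<and> lin_indpt T" "card (set (cols A))" "{}"]
    by (meson List.finite_set card_mono empty_iff empty_subsetI finite_lin_indpt2 rev_finite_subset)
  then show ?thesis
    using that rank_card_indpt[OF assms S] unfolding maximal_def by auto
qed

lemma (in vec_space) orthogonal_to_spanning_set:
  assumes span_S: "span S = carrier_vec n" and S: "S \<subseteq> carrier_vec n"
    and u: "u \<in> carrier_vec n"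
    and orth: "\<And>s. s \<in> S \<Longrightarrow> (\<Sum>r<n. u $ r * s $ r) = 0"
  shows "u = 0\<^sub>v n"
proof (rule eq_vecI)
  fix i assume "i < dim_vec (0\<^sub>v n)"
  then have i: "i < n" by simp
  have "unit_vec n i \<in> span S"
    using span_S i by simp
  then obtain a A where A: "unit_vec n i = lincomb a A" "finite A" "A \<subseteq> S"
    unfolding span_def by blast
  have A_carrier: "A \<subseteq> carrier_vec n"
    using A(3) S by blast
  have "u $ i = (\<Sum>r<n. u $ r * unit_vec n i $ r)"
    using i by (simp add: unit_vec_def if_distrib sum.delta cong: if_cong)
  also have "\<dots> = (\<Sum>r<n. u $ r * (\<Sum>s\<in>A. a s * s $ r))"
    using A(1) lincomb_index[OF _ A_carrier] by (intro sum.cong) auto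
  also have "\<dots> = (\<Sum>s\<in>A. a s * (\<Sum>r<n. u $ r * s $ r))"
    by (simp add: sum_distrib_left sum_distrib_right mult_ac sum.swap[of _ A])
  also have "\<dots> = 0"
    using orth A(3) by (auto intro!: sum.neutral)
  finally show "u $ i = 0\<^sub>v n $ i"
    using i by simp
qed (use u in simp)

lemma full_row_rank_left_null:
  fixes G :: "'a::field mat"
  assumes G: "G \<in> carrier_mat k n" and rk: "vec_space.rank k G = k"
    and u: "u \<in> carrier_vec k"
    and null: "\<And>j. j < n \<Longrightarrow> (\<Sum>i<k. u $ i * G $$ (i, j)) = 0"
  shows "u = 0\<^sub>v k"
proof -
  interpret vec_space "TYPE('a)" k .
  obtain S where S: "S \<subseteq> set (cols G)" "lin_indpt S" "card S = k"
    using lin_indpt_cols_card_rank[OF G] rk by metis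
  have S_carrier: "S \<subseteq> carrier_vec k"
    using S(1) G cols_dim by blast
  have "basis S"
    using S S_carrier finite_subset[OF S(1)] by (intro dim_li_is_basis) (auto simp: dim_is_n)
  then have "span S = carrier_vec k"
    unfolding basis_def by simp
  moreover have "(\<Sum>i<k. u $ i * s $ i) = 0" if s: "s \<in> S" for s
  proof -
    obtain j where "j < n" "s = col G j"
      using s S(1) G by (auto simp: cols_def)
    then show ?thesis
      using null G by simp
  qed
  ultimately show ?thesis
    using orthogonal_to_spanning_set S_carrier u by blast
qed

lemma (in vec_space) nonzero_cols_lin_indpt:
  assumes A: "A \<in> carrier_mat n nc" and rk: "rank A = card (colsupp A)"
  shows "inj_on (col A) (colsupp A)" and "lin_indpt (col A ` colsupp A)"
proof -
  obtain S where S: "S \<subseteq> set (cols A)" "lin_indpt S" "card S = card (colsupp A)"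
    using lin_indpt_cols_card_rank[OF A] rk by metis
  have fin: "finite (colsupp A)"
    unfolding colsupp_def by simp
  have "0\<^sub>v n \<notin> S"
  proof -
    have "S \<subseteq> carrier_vec n" using S(1) A cols_dim by blast
    moreover have "UNIV \<noteq> {0::'a}" by (metis UNIV_I singletonD zero_neq_one)
    ultimately show ?thesis
      using zero_nin_lin_indpt S(2) by (auto simp: class_ring_simps)
  qed
  have "S \<subseteq> col A ` colsupp A"
  proof
    fix s assume s: "s \<in> S"
    then obtain j where "j < nc" "s = col A j"
      using S(1) A by (auto simp: cols_def)
    then show "s \<in> col A ` colsupp A"
      using s \<open>0\<^sub>v n \<notin> S\<close> A by (auto simp: colsupp_def)
  qed
  moreover have "card (col A ` colsupp A) \<le> card S"
    using S(3) fin card_image_le by auto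
  ultimately have "S = col A ` colsupp A" and "card (col A ` colsupp A) = card (colsupp A)"
    using fin card_seteq S(3) card_image_le[OF fin, of "col A"] by (metis finite_imageI le_antisym card_mono)+
  then show "inj_on (col A) (colsupp A)" and "lin_indpt (col A ` colsupp A)"
    using S(2) eq_card_imp_inj_on[OF fin] by auto
qed

lemma nonzero_cols_combination_zero:
  fixes A :: "'a::field mat"
  assumes A: "A \<in> carrier_mat n nc" and rk: "vec_space.rank n A = card (colsupp A)"
    and comb: "\<And>r. r < n \<Longrightarrow> (\<Sum>c\<in>colsupp A. \<mu> c * A $$ (r, c)) = 0"
    and c0: "c0 \<in> colsupp A"
  shows "\<mu> c0 = 0"
proof -
  interpret vec_space "TYPE('a)" n .
  let ?Z = "colsupp A"
  note inj = nonzero_cols_lin_indpt(1)[OF A rk] and indpt = nonzero_cols_lin_indpt(2)[OF A rk]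
  have fin: "finite ?Z" unfolding colsupp_def by simp
  have Z_carrier: "col A ` ?Z \<subseteq> carrier_vec n"
    using A by auto
  define a where "a v = \<mu> (the_inv_into ?Z (col A) v)" for v
  have a_col: "a (col A c) = \<mu> c" if "c \<in> ?Z" for c
    using the_inv_into_f_f[OF inj that] a_def by simp
  have "lincomb a (col A ` ?Z) = 0\<^sub>v n"
  proof (rule eq_vecI)
    fix r assume "r < dim_vec (0\<^sub>v n)"
    then have r: "r < n" by simp
    have "lincomb a (col A ` ?Z) $ r = (\<Sum>c\<in>?Z. a (col A c) * col A c $ r)"
      using lincomb_index[OF r Z_carrier] sum.reindex[OF inj] by simp
    also have "\<dots> = (\<Sum>c\<in>?Z. \<mu> c * A $$ (r, c))"
      using a_col A r by (intro sum.cong) (auto simp: colsupp_def)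
    finally show "lincomb a (col A ` ?Z) $ r = 0\<^sub>v n $ r"
      using comb[OF r] r by simp
  qed (use lincomb_closed[OF Z_carrier] in auto)
  then have "a (col A c0) = 0"
    using not_lindepD[OF indpt _ subset_refl] fin c0 by (auto simp: class_ring_simps)
  then show ?thesis
    using a_col c0 by simp
qed

lemma nonzero_cols_combination_zero_submatrix:
  fixes Q :: "'a::field mat"
  assumes Q: "Q \<in> carrier_mat nr nc" and L: "L \<subseteq> {..<nr}" and J: "J \<subseteq> {..<nc}"
    and rk: "mat_rank (submatrix Q L J) = card (colsupp (submatrix Q L J))"
    and comb: "\<And>l. l \<in> L \<Longrightarrow> (\<Sum>a\<in>nonzero_cols Q L J. \<nu> a * Q $$ (l, a)) = 0"
    and a0: "a0 \<in> nonzero_cols Q L J"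
  shows "\<nu> a0 = 0"
proof -
  let ?A = "submatrix Q L J"
  note A = submatrix_carrier_mat[OF Q L J]
  have fin: "finite J" using J finite_subset by blast
  have "colsupp ?A = {c. c < card J \<and> (\<exists>l\<in>L. Q $$ (l, pick J c) \<noteq> 0)}"
    using colsupp_submatrix[OF Q L J] pick_in_set by (auto simp: nonzero_cols_def)
  then have bij: "bij_betw (pick J) (colsupp ?A) (nonzero_cols Q L J)"
    using bij_betw_pick_Collect[OF fin] by (simp add: nonzero_cols_def)
  have comb': "(\<Sum>c\<in>colsupp ?A. \<nu> (pick J c) * ?A $$ (r, c)) = 0" if r: "r < card L" for r
  proof -
    have "(\<Sum>c\<in>colsupp ?A. \<nu> (pick J c) * ?A $$ (r, c))
        = (\<Sum>c\<in>colsupp ?A. \<nu> (pick J c) * Q $$ (pick L r, pick J c))"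
      using submatrix_index_pick[OF Q L J] r A by (intro sum.cong) (auto simp: colsupp_def)
    also have "\<dots> = (\<Sum>a\<in>nonzero_cols Q L J. \<nu> a * Q $$ (pick L r, a))"
      using sum.reindex_bij_betw[OF bij] by simp
    finally show ?thesis
      using comb pick_in_set r by simp
  qed
  have c0: "card {x \<in> J. x < a0} \<in> colsupp ?A"
  proof -
    have "a0 \<in> J" using a0 by (simp add: nonzero_cols_def)
    then have "card {x \<in> J. x < a0} < card J"
      using fin by (intro psubset_card_mono) auto
    then show ?thesis
      using a0 \<open>a0 \<in> J\<close> by (simp add: colsupp_submatrix[OF Q L J] pick_card_in_set)
  qed
  have rk': "vec_space.rank (card L) ?A = card (colsupp ?A)"
    using rk A unfolding mat_rank_def by simp
  have "\<nu> (pick J (card {x \<in> J. x < a0})) = 0"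
    by (rule nonzero_cols_combination_zero[OF A rk' comb' c0])
  then show ?thesis
    using a0 pick_card_in_set by (simp add: nonzero_cols_def)
qed

lemma card_UNIV_field_ge_2: "2 \<le> card (UNIV :: 'a::{field,finite} set)"
proof -
  have "card {0::'a, 1} \<le> card (UNIV :: 'a set)"
    by (intro card_mono) auto
  then show ?thesis by simp
qed

lemma card_vecs_supported_on:
  assumes Z: "Z \<subseteq> {..<d}"
  shows "card {w \<in> carrier_vec d. \<forall>c<d. c \<notin> Z \<longrightarrow> w $ c = (0::'a::{zero,finite})}
    = card (UNIV :: 'a set) ^ card Z"
proof -
  define V where "V = {w \<in> carrier_vec d. \<forall>c<d. c \<notin> Z \<longrightarrow> w $ c = (0::'a)}"
  define g where "g f = vec d (\<lambda>c. if c \<in> Z then f c else 0)" for f :: "nat \<Rightarrow> 'a"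
  have "inj_on g (PiE Z (\<lambda>_. UNIV))"
  proof (rule inj_onI, rule ext)
    fix f1 f2 c assume f: "f1 \<in> PiE Z (\<lambda>_. UNIV)" "f2 \<in> PiE Z (\<lambda>_. UNIV)" and eq: "g f1 = g f2"
    show "f1 c = f2 c"
    proof (cases "c \<in> Z")
      case True
      then show ?thesis
        using Z arg_cong[OF eq, of "\<lambda>v. v $ c"] unfolding g_def by auto
    next
      case False
      then show ?thesis using f by (auto simp: PiE_def extensional_def)
    qed
  qed
  moreover have "g ` PiE Z (\<lambda>_. UNIV) = V"
  proof (intro equalityI subsetI)
    fix w assume "w \<in> V"
    then have "w = g (restrict (\<lambda>c. w $ c) Z)"
      unfolding V_def g_def by (auto intro!: eq_vecI)
    then show "w \<in> g ` PiE Z (\<lambda>_. UNIV)" by auto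
  qed (auto simp: g_def V_def)
  ultimately have "card V = card (PiE Z (\<lambda>_. UNIV :: 'a set))"
    using card_image by fastforce
  also have "\<dots> = card (UNIV :: 'a set) ^ card Z"
    using finite_subset[OF Z] by (simp add: card_PiE)
  finally show ?thesis
    unfolding V_def .
qed

lemma card_carrier_vec: "card (carrier_vec d :: 'a::{zero,finite} vec set) = card (UNIV :: 'a set) ^ d"
  using card_vecs_supported_on[of "{..<d}" d] by simp

lemma finite_carrier_mat: "finite (carrier_mat nr nc :: 'a::finite mat set)"
proof -
  have "carrier_mat nr nc \<subseteq> (\<lambda>f. mat nr nc f) ` PiE ({..<nr} \<times> {..<nc}) (\<lambda>_. UNIV :: 'a set)"
  proof
    fix A :: "'a mat" assume "A \<in> carrier_mat nr nc"
    then have "A = mat nr nc (restrict (index_mat A) ({..<nr} \<times> {..<nc}))"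
      by (auto intro!: eq_matI)
    moreover have "restrict (index_mat A) ({..<nr} \<times> {..<nc}) \<in> PiE ({..<nr} \<times> {..<nc}) (\<lambda>_. UNIV)"
      by simp
    ultimately show "A \<in> (\<lambda>f. mat nr nc f) ` PiE ({..<nr} \<times> {..<nc}) (\<lambda>_. UNIV)"
      by blast
  qed
  then show ?thesis
    by (rule finite_subset) (intro finite_imageI finite_PiE; simp)
qed

lemma minus_vec_eq_0_iff:
  "u \<in> carrier_vec d \<Longrightarrow> v \<in> carrier_vec d \<Longrightarrow> u - v = 0\<^sub>v d \<longleftrightarrow> u = (v :: 'a::ab_group_add vec)"
  by (auto simp: vec_eq_iff)

(* Pigeonhole: there are more vectors u than restrictions of u G to the columns R. *)
lemma ex_nonzero_vec_vanishing_on: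
  fixes G :: "'a::{field,finite} mat"
  assumes "finite R" and "card R < k"
  shows "\<exists>u\<in>carrier_vec k. u \<noteq> 0\<^sub>v k \<and> (\<forall>j\<in>R. (\<Sum>i<k. u $ i * G $$ (i, j)) = 0)"
proof -
  define h where "h u = restrict (\<lambda>j. \<Sum>i<k. u $ i * G $$ (i, j)) R" for u :: "'a vec"
  have "card (PiE R (\<lambda>_. UNIV :: 'a set)) = card (UNIV :: 'a set) ^ card R"
    using assms(1) by (simp add: card_PiE)
  also have "\<dots> < card (UNIV :: 'a set) ^ k"
    using assms(2) card_UNIV_field_ge_2[where 'a = 'a] by (intro power_strict_increasing) auto
  also have "\<dots> = card (carrier_vec k :: 'a vec set)"
    by (rule card_carrier_vec[symmetric])
  finally have less: "card (PiE R (\<lambda>_. UNIV :: 'a set)) < card (carrier_vec k :: 'a vec set)" .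
  have "\<not> inj_on h (carrier_vec k)"
  proof
    assume "inj_on h (carrier_vec k)"
    moreover have "h ` carrier_vec k \<subseteq> PiE R (\<lambda>_. UNIV)"
      unfolding h_def by auto
    moreover have "finite (PiE R (\<lambda>_. UNIV :: 'a set))"
      using assms(1) by (simp add: finite_PiE)
    ultimately have "card (carrier_vec k :: 'a vec set) \<le> card (PiE R (\<lambda>_. UNIV :: 'a set))"
      by (rule card_inj_on_le)
    with less show False by simp
  qed
  then obtain u1 u2 where u: "u1 \<in> carrier_vec k" "u2 \<in> carrier_vec k" "u1 \<noteq> u2" "h u1 = h u2"
    unfolding inj_on_def by auto
  have "(\<Sum>i<k. (u1 - u2) $ i * G $$ (i, j)) = 0" if "j \<in> R" for j
  proof -
    have "(\<Sum>i<k. u1 $ i * G $$ (i, j)) = (\<Sum>i<k. u2 $ i * G $$ (i, j))"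
      using fun_cong[OF u(4), of j] that unfolding h_def by simp
    moreover have "(\<Sum>i<k. (u1 - u2) $ i * G $$ (i, j))
        = (\<Sum>i<k. u1 $ i * G $$ (i, j) - u2 $ i * G $$ (i, j))"
      using u by (intro sum.cong) (auto simp: left_diff_distrib)
    ultimately show ?thesis
      by (simp add: sum_subtractf)
  qed
  moreover have "u1 - u2 \<noteq> 0\<^sub>v k"
    using u(1-3) by (simp add: minus_vec_eq_0_iff)
  ultimately show ?thesis
    using u by auto
qed

section \<open>MDS codes\<close>

lemma code_of_dim: "c \<in> code_of G \<Longrightarrow> dim_vec c = dim_col G"
  unfolding code_of_def by auto

lemma min_distance_le_hweight:
  assumes "c \<in> code_of G" "c \<noteq> 0\<^sub>v (dim_col G)"
  shows "min_distance G \<le> hweight c"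
proof -
  have "hweight c' \<le> dim_col G" if "c' \<in> code_of G" for c'
  proof -
    have "{i. i < dim_vec c' \<and> c' $ i \<noteq> 0} \<subseteq> {..<dim_col G}"
      using code_of_dim[OF that] by auto
    then show ?thesis
      unfolding hweight_def using card_mono[of "{..<dim_col G}"] by fastforce
  qed
  then have "{hweight c | c. c \<in> code_of G \<and> c \<noteq> 0\<^sub>v (dim_col G)} \<subseteq> {..dim_col G}"
    by auto
  then have "finite {hweight c | c. c \<in> code_of G \<and> c \<noteq> 0\<^sub>v (dim_col G)}"
    by (rule finite_subset) simp
  then show ?thesis
    unfolding min_distance_def using assms by (intro Min_le) auto
qed

lemma mds_codeword_nonzero_off_zeros:
  fixes G :: "'a::field mat"
  assumes mds: "mds_generator G n k"
    and u: "u \<in> carrier_vec k" "u \<noteq> 0\<^sub>v k"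
    and R: "R \<subseteq> {0..<n}" "card R = k - 1" and k: "1 \<le> k"
    and zero_on_R: "\<forall>j\<in>R. (\<Sum>i<k. u $ i * G $$ (i, j)) = 0"
    and j: "j \<in> {0..<n} - R"
  shows "(\<Sum>i<k. u $ i * G $$ (i, j)) \<noteq> 0"
proof -
  have G: "G \<in> carrier_mat k n" and rk: "mat_rank G = k" and d: "min_distance G = n - k + 1"
    using mds unfolding mds_generator_def by auto
  define c where "c = transpose_mat G *\<^sub>v u"
  have c_index: "c $ i = (\<Sum>l<k. u $ l * G $$ (l, i))" if "i < n" for i
    using that G u unfolding c_def by (auto simp: scalar_prod_def mult.commute intro!: sum.cong)
  have c_code: "c \<in> code_of G"
    using u G unfolding code_of_def c_def by auto
  have "c \<noteq> 0\<^sub>v n"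
  proof
    assume "c = 0\<^sub>v n"
    then have "(\<Sum>l<k. u $ l * G $$ (l, j)) = 0" if "j < n" for j
      using c_index[OF that] that by simp
    then have "u = 0\<^sub>v k"
      using full_row_rank_left_null[OF G _ u(1)] rk G unfolding mat_rank_def by simp
    with u(2) show False ..
  qed
  then have "n - k + 1 \<le> hweight c"
    using min_distance_le_hweight[OF c_code] d G by simp
  moreover have sub: "{i. i < dim_vec c \<and> c $ i \<noteq> 0} \<subseteq> {0..<n} - R"
    using zero_on_R c_index G unfolding c_def by auto
  moreover have "card ({0..<n} - R) \<le> n - k + 1"
    using R by (simp add: card_Diff_subset finite_subset)
  ultimately have "{i. i < dim_vec c \<and> c $ i \<noteq> 0} = {0..<n} - R"
    unfolding hweight_def by (intro card_seteq[OF _ sub]) simp_all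
  then have "c $ j \<noteq> 0"
    using j by blast
  then show ?thesis
    using j c_index by simp
qed

lemma mds_codeword_with_zeros:
  fixes G :: "'a::{field,finite} mat"
  assumes mds: "mds_generator G n k" and k: "1 \<le> k" and R: "R \<subseteq> {0..<n}" "card R = k - 1"
  obtains u where "\<forall>j\<in>R. (\<Sum>i<k. u $ i * G $$ (i, j)) = 0"
    and "\<forall>j\<in>{0..<n} - R. (\<Sum>i<k. u $ i * G $$ (i, j)) \<noteq> 0"
proof -
  have "finite R"
    using R(1) finite_subset by blast
  then obtain u where u: "u \<in> carrier_vec k" "u \<noteq> 0\<^sub>v k" "\<forall>j\<in>R. (\<Sum>i<k. u $ i * G $$ (i, j)) = 0"
    using ex_nonzero_vec_vanishing_on[of R k G] R(2) k by auto
  then show ?thesis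
    using that mds_codeword_nonzero_off_zeros[OF mds u(1,2) R k u(3)] by blast
qed

section \<open>Entropy of additive maps\<close>

lemma entropy_unif_const_fibers:
  assumes C: "finite C" "C \<noteq> {}" and b: "1 < b"
    and fibers: "\<And>x. x \<in> C \<Longrightarrow> card {y \<in> C. f y = f x} = c0"
  shows "entropy_unif b C f = log b (card (f ` C))"
proof -
  define M where "M = card (f ` C)"
  have M: "0 < M" using C M_def by (simp add: card_gt_0_iff)
  have fibers': "card {y \<in> C. f y = z} = c0" if "z \<in> f ` C" for z
    using that fibers by auto
  have "C = (\<Union>z\<in>f ` C. {y \<in> C. f y = z})" by auto
  also have "card \<dots> = (\<Sum>z\<in>f ` C. card {y \<in> C. f y = z})"
    by (rule card_UN_disjoint) (use C(1) in auto)
  finally have "card C = M * c0"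
    using fibers' M_def by simp
  then have "prob_unif C f z = 1 / M" if "z \<in> f ` C" for z
    unfolding prob_unif_def using fibers'[OF that] C by (auto simp: card_gt_0_iff)
  then have "entropy_unif b C f = - (\<Sum>z\<in>f ` C. 1 / M * log b (1 / M))"
    unfolding entropy_unif_def by simp
  also have "\<dots> = log b M"
    using M b M_def by (simp add: log_divide)
  finally show ?thesis
    unfolding M_def .
qed

lemma add_vec_right_cancel:
  "a \<in> carrier_vec d \<Longrightarrow> b \<in> carrier_vec d \<Longrightarrow> c \<in> carrier_vec d \<Longrightarrow>
    a + c = b + (c :: 'a::ab_group_add vec) \<longleftrightarrow> a = b"
  by (auto simp: vec_eq_iff)

lemma card_fiber_additive:
  fixes f :: "'a::ab_group_add mat \<Rightarrow> 'b::ab_group_add vec"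
  assumes f_carrier: "\<And>X. X \<in> carrier_mat nr nc \<Longrightarrow> f X \<in> carrier_vec d"
    and f_add: "\<And>X Y. X \<in> carrier_mat nr nc \<Longrightarrow> Y \<in> carrier_mat nr nc \<Longrightarrow> f (X + Y) = f X + f Y"
    and X: "X \<in> carrier_mat nr nc"
  shows "card {Y \<in> carrier_mat nr nc. f Y = f X} = card {Y \<in> carrier_mat nr nc. f Y = f (0\<^sub>m nr nc)}"
proof -
  let ?C = "carrier_mat nr nc"
  have f_0X: "f (0\<^sub>m nr nc) + f X = f X"
    using f_add[of "0\<^sub>m nr nc" X] X by simp
  have shift: "f (Y + X) = f X \<longleftrightarrow> f Y = f (0\<^sub>m nr nc)" if Y: "Y \<in> ?C" for Y
  proof -
    have "f (Y + X) = f X \<longleftrightarrow> f Y + f X = f (0\<^sub>m nr nc) + f X"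
      by (simp only: f_add[OF Y X] f_0X)
    also have "\<dots> \<longleftrightarrow> f Y = f (0\<^sub>m nr nc)"
      using f_carrier Y X by (intro add_vec_right_cancel) auto
    finally show ?thesis .
  qed
  have "bij_betw (\<lambda>Y. Y + X) {Y \<in> ?C. f Y = f (0\<^sub>m nr nc)} {Y \<in> ?C. f Y = f X}"
  proof (rule bij_betw_byWitness[where f' = "\<lambda>Y. Y - X"])
    have cancel: "Y + X - X = Y" "Y - X + X = Y" if "Y \<in> ?C" for Y
      using that X by (auto intro!: eq_matI)
    then show "\<forall>Y\<in>{Y \<in> ?C. f Y = f (0\<^sub>m nr nc)}. Y + X - X = Y"
      and "\<forall>Y\<in>{Y \<in> ?C. f Y = f X}. Y - X + X = Y"
      by auto
    show "(\<lambda>Y. Y + X) ` {Y \<in> ?C. f Y = f (0\<^sub>m nr nc)} \<subseteq> {Y \<in> ?C. f Y = f X}"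
      using shift X by auto
    show "(\<lambda>Y. Y - X) ` {Y \<in> ?C. f Y = f X} \<subseteq> {Y \<in> ?C. f Y = f (0\<^sub>m nr nc)}"
    proof
      fix Z assume "Z \<in> (\<lambda>Y. Y - X) ` {Y \<in> ?C. f Y = f X}"
      then obtain Y where Y: "Y \<in> ?C" "f Y = f X" "Z = Y - X" by blast
      then have "Z \<in> ?C" using X by (simp add: minus_carrier_mat)
      moreover have "f Z = f (0\<^sub>m nr nc)"
        using shift[OF \<open>Z \<in> ?C\<close>] cancel(2)[OF Y(1)] Y by simp
      ultimately show "Z \<in> {Y \<in> ?C. f Y = f (0\<^sub>m nr nc)}" by simp
    qed
  qed
  then show ?thesis
    by (simp add: bij_betw_same_card)
qed

section \<open>The answer as a linear function of X\<close>

locale mds_retrieval =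
  fixes G :: "'a::{field,finite} mat" and Q :: "'a mat"
    and n k t m \<alpha> \<beta> :: nat and F N :: "nat set"
  assumes mds: "mds_generator G n k"
    and k_pos: "1 \<le> k"
    and t_pos: "1 \<le> t"
    and Q_dim: "Q \<in> carrier_mat (\<alpha> * m) (\<beta> * n)"
    and Q_cond: "\<And>T F. T \<subseteq> {0..<n} \<Longrightarrow> card T = t \<Longrightarrow> F \<subseteq> {0..<m} \<Longrightarrow> F \<noteq> {} \<Longrightarrow>
        mat_rank (submatrix Q (psi \<alpha> F) (psi \<beta> T))
          = card (colsupp (submatrix Q (psi \<alpha> F) (psi \<beta> T)))"
    and F: "F \<subseteq> {0..<m}" "F \<noteq> {}"
    and N: "N \<subseteq> {0..<n}" "card N = k + t - 1"
begin

abbreviation rows_F :: "nat set" where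
  "rows_F \<equiv> psi \<alpha> F"

definition coord :: "'a mat \<Rightarrow> nat \<Rightarrow> 'a" where
  "coord X a = (\<Sum>l\<in>rows_F. (\<Sum>i<k. X $$ (l, i) * G $$ (i, a div \<beta>)) * Q $$ (l, a))"

lemma G_carrier: "G \<in> carrier_mat k n"
  using mds unfolding mds_generator_def by simp

lemma rows_subset: "rows_F \<subseteq> {..<\<alpha> * m}"
  using psi_subset_lessThan[OF F(1)] .

lemma finite_N: "finite N"
  using N(1) finite_subset by blast

lemma answer_eq:
  assumes X: "X \<in> carrier_mat (\<alpha> * m) k"
  shows "answer G Q X \<alpha> \<beta> F N = vec (\<beta> * card N) (\<lambda>c. coord X (pick (psi \<beta> N) c))"
proof -
  have "hadamard (kron_ones (row_sub (X * G) l N) \<beta>) (row_sub Q l (psi \<beta> N)) $ c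
      = (\<Sum>i<k. X $$ (l, i) * G $$ (i, pick (psi \<beta> N) c div \<beta>)) * Q $$ (l, pick (psi \<beta> N) c)"
    if l: "l \<in> rows_F" and c: "c < \<beta> * card N" for l c
  proof -
    have \<beta>: "0 < \<beta>" using c by (cases \<beta>) auto
    have l_lt: "l < \<alpha> * m" using l rows_subset by auto
    have "c div \<beta> < card N"
      using c \<beta> by (simp add: div_less_iff_less_mult mult.commute)
    then have j: "pick N (c div \<beta>) < n"
      using N(1) pick_in_set by fastforce
    have N_cols: "N \<subseteq> {..<dim_col (X * G)}" and P_cols: "psi \<beta> N \<subseteq> {..<dim_col Q}"
      using N(1) G_carrier Q_dim psi_subset_lessThan[OF N(1)] by auto
    have "hadamard (kron_ones (row_sub (X * G) l N) \<beta>) (row_sub Q l (psi \<beta> N)) $ c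
        = row_sub (X * G) l N $ (c div \<beta>) * row_sub Q l (psi \<beta> N) $ c"
      using c l_lt X by (intro hadamard_kron_ones_index) (simp add: dim_row_sub[OF N_cols] mult.commute)
    also have "\<dots> = (X * G) $$ (l, pick N (c div \<beta>)) * Q $$ (l, pick (psi \<beta> N) c)"
      using l_lt X Q_dim c \<open>c div \<beta> < card N\<close> N_cols P_cols
      by (simp add: row_sub_index card_psi[OF finite_N])
    also have "(X * G) $$ (l, pick N (c div \<beta>)) = (\<Sum>i<k. X $$ (l, i) * G $$ (i, pick N (c div \<beta>)))"
      using X G_carrier l_lt j by (simp add: scalar_prod_def lessThan_atLeast0)
    also have "pick N (c div \<beta>) = pick (psi \<beta> N) c div \<beta>"
      using pick_psi[OF finite_N c] \<beta> by simp
    finally show ?thesis .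
  qed
  then show ?thesis
    unfolding answer_def coord_def Let_def by (intro eq_vecI) auto
qed

lemma answer_carrier: "X \<in> carrier_mat (\<alpha> * m) k \<Longrightarrow> answer G Q X \<alpha> \<beta> F N \<in> carrier_vec (\<beta> * card N)"
  by (simp add: answer_eq)

lemma coord_add:
  assumes "X \<in> carrier_mat (\<alpha> * m) k" "Y \<in> carrier_mat (\<alpha> * m) k"
  shows "coord (X + Y) a = coord X a + coord Y a"
proof -
  have "coord (X + Y) a
      = (\<Sum>l\<in>rows_F. (\<Sum>i<k. (X $$ (l, i) + Y $$ (l, i)) * G $$ (i, a div \<beta>)) * Q $$ (l, a))"
    unfolding coord_def using assms rows_subset by (intro sum.cong refl) auto
  then show ?thesis
    unfolding coord_def by (simp add: distrib_right sum.distrib)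
qed

lemma answer_add:
  assumes "X \<in> carrier_mat (\<alpha> * m) k" "Y \<in> carrier_mat (\<alpha> * m) k"
  shows "answer G Q (X + Y) \<alpha> \<beta> F N = answer G Q X \<alpha> \<beta> F N + answer G Q Y \<alpha> \<beta> F N"
proof -
  have "X + Y \<in> carrier_mat (\<alpha> * m) k"
    using assms by simp
  then show ?thesis
    unfolding answer_eq[OF assms(1)] answer_eq[OF assms(2)] answer_eq[OF \<open>X + Y \<in> _\<close>]
    by (intro eq_vecI) (simp_all add: coord_add[OF assms])
qed

lemma coord_eq_0: "(\<And>l. l \<in> rows_F \<Longrightarrow> Q $$ (l, a) = 0) \<Longrightarrow> coord X a = 0"
  unfolding coord_def by simp

lemma dependency_restrict_to_blocks:
  fixes u :: "'a vec" and \<gamma> :: "nat \<Rightarrow> 'a"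
  defines "w j \<equiv> \<Sum>i<k. u $ i * G $$ (i, j)"
  assumes dep: "\<And>l i. l \<in> rows_F \<Longrightarrow> i < k \<Longrightarrow>
      (\<Sum>a\<in>nonzero_cols Q rows_F (psi \<beta> N). \<gamma> a * (G $$ (i, a div \<beta>) * Q $$ (l, a))) = 0"
    and T: "T \<subseteq> N" and w_0: "\<And>j. j \<in> N - T \<Longrightarrow> w j = 0"
    and l: "l \<in> rows_F"
  shows "(\<Sum>a\<in>nonzero_cols Q rows_F (psi \<beta> T). \<gamma> a * w (a div \<beta>) * Q $$ (l, a)) = 0"
proof -
  let ?P = "nonzero_cols Q rows_F (psi \<beta> N)"
  have "(\<Sum>a\<in>?P. \<gamma> a * w (a div \<beta>) * Q $$ (l, a))
      = (\<Sum>i<k. u $ i * (\<Sum>a\<in>?P. \<gamma> a * (G $$ (i, a div \<beta>) * Q $$ (l, a))))"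
    unfolding w_def by (simp add: sum_distrib_left sum_distrib_right sum.swap[of _ ?P] mult_ac)
  also have "\<dots> = 0"
    using dep l by simp
  finally have sum_P: "(\<Sum>a\<in>?P. \<gamma> a * w (a div \<beta>) * Q $$ (l, a)) = 0" .
  have sub: "nonzero_cols Q rows_F (psi \<beta> T) \<subseteq> ?P"
    using T by (auto simp: nonzero_cols_def mem_psi_iff)
  have w_0': "w (a div \<beta>) = 0" if "a \<in> ?P - nonzero_cols Q rows_F (psi \<beta> T)" for a
    using that by (intro w_0) (auto simp: nonzero_cols_def mem_psi_iff)
  have "finite ?P"
    using finite_psi[OF finite_N] by (simp add: nonzero_cols_def)
  then have "(\<Sum>a\<in>nonzero_cols Q rows_F (psi \<beta> T). \<gamma> a * w (a div \<beta>) * Q $$ (l, a))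
      = (\<Sum>a\<in>?P. \<gamma> a * w (a div \<beta>) * Q $$ (l, a))"
    using w_0' by (intro sum.mono_neutral_left sub) auto
  with sum_P show ?thesis by simp
qed

lemma coord_functionals_indep:
  assumes dep: "\<And>l i. l \<in> rows_F \<Longrightarrow> i < k \<Longrightarrow>
      (\<Sum>a\<in>nonzero_cols Q rows_F (psi \<beta> N). \<gamma> a * (G $$ (i, a div \<beta>) * Q $$ (l, a))) = 0"
    and a0: "a0 \<in> nonzero_cols Q rows_F (psi \<beta> N)"
  shows "\<gamma> a0 = 0"
proof -
  have \<beta>: "0 < \<beta>" and j0: "a0 div \<beta> \<in> N"
    using a0 by (auto simp: nonzero_cols_def mem_psi_iff)
  have "t \<le> card N"
    using N(2) k_pos by simp
  then obtain T where T: "T \<subseteq> N" "a0 div \<beta> \<in> T" "card T = t"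
    by (rule ex_subset_card_containing[OF finite_N j0 t_pos])
  define R where "R = N - T"
  have R: "R \<subseteq> {0..<n}" "card R = k - 1"
    using N T finite_N by (auto simp: R_def card_Diff_subset finite_subset)
  obtain u where zero_R: "\<forall>j\<in>R. (\<Sum>i<k. u $ i * G $$ (i, j)) = 0"
    and nonzero_off_R: "\<forall>j\<in>{0..<n} - R. (\<Sum>i<k. u $ i * G $$ (i, j)) \<noteq> 0"
    by (rule mds_codeword_with_zeros[OF mds k_pos R])
  define w where "w j = (\<Sum>i<k. u $ i * G $$ (i, j))" for j
  have w_T: "w j \<noteq> 0" if "j \<in> T" for j
    using that T(1) N(1) nonzero_off_R unfolding w_def R_def by auto
  have T_cols: "psi \<beta> T \<subseteq> {..<\<beta> * n}"
    using T(1) N(1) by (intro psi_subset_lessThan) auto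
  have comb: "(\<Sum>a\<in>nonzero_cols Q rows_F (psi \<beta> T). \<gamma> a * w (a div \<beta>) * Q $$ (l, a)) = 0"
    if "l \<in> rows_F" for l
    unfolding w_def
  proof (rule dependency_restrict_to_blocks[OF dep T(1) _ that])
    show "(\<Sum>i<k. u $ i * G $$ (i, j)) = 0" if "j \<in> N - T" for j
      using that zero_R by (simp add: R_def)
  qed
  have a0_T: "a0 \<in> nonzero_cols Q rows_F (psi \<beta> T)"
    using a0 T(2) \<beta> by (auto simp: nonzero_cols_def mem_psi_iff)
  have rank: "mat_rank (submatrix Q rows_F (psi \<beta> T)) = card (colsupp (submatrix Q rows_F (psi \<beta> T)))"
    using T N(1) F by (intro Q_cond) auto
  have "\<gamma> a0 * w (a0 div \<beta>) = 0"
    by (rule nonzero_cols_combination_zero_submatrix[OF Q_dim rows_subset T_cols rank comb a0_T])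
  then show ?thesis
    using w_T[OF T(2)] by simp
qed

lemma coord_mat:
  "coord (mat (\<alpha> * m) k x) a
    = (\<Sum>d\<in>rows_F \<times> {..<k}. G $$ (snd d, a div \<beta>) * Q $$ (fst d, a) * x d)"
proof -
  have "coord (mat (\<alpha> * m) k x) a = (\<Sum>l\<in>rows_F. \<Sum>i<k. G $$ (i, a div \<beta>) * Q $$ (l, a) * x (l, i))"
    unfolding coord_def sum_distrib_right
  proof (intro sum.cong refl)
    fix l i assume "l \<in> rows_F" "i \<in> {..<k}"
    then have "mat (\<alpha> * m) k x $$ (l, i) = x (l, i)"
      using rows_subset by auto
    then show "mat (\<alpha> * m) k x $$ (l, i) * G $$ (i, a div \<beta>) * Q $$ (l, a)
        = G $$ (i, a div \<beta>) * Q $$ (l, a) * x (l, i)"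
      by (simp add: mult_ac)
  qed
  then show ?thesis
    by (simp add: sum.cartesian_product case_prod_unfold)
qed

lemma coord_surj:
  "\<exists>X\<in>carrier_mat (\<alpha> * m) k. \<forall>a\<in>nonzero_cols Q rows_F (psi \<beta> N). coord X a = v a"
proof -
  let ?P = "nonzero_cols Q rows_F (psi \<beta> N)" and ?D = "rows_F \<times> {..<k}"
  define r where "r a d = G $$ (snd d, a div \<beta>) * Q $$ (fst d, a)" for a and d :: "nat \<times> nat"
  have fin_P: "finite ?P"
    using finite_psi[OF finite_N] by (simp add: nonzero_cols_def)
  have fin_D: "finite ?D"
    using finite_subset[OF rows_subset] by simp
  have "\<exists>x. \<forall>a\<in>?P. (\<Sum>d\<in>?D. r a d * x d) = v a"
  proof (rule linear_system_solvable[OF fin_P fin_D], intro ballI)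
    fix \<gamma> a0 assume dep: "\<forall>d\<in>?D. (\<Sum>a\<in>?P. \<gamma> a * r a d) = 0" and a0: "a0 \<in> ?P"
    show "\<gamma> a0 = 0"
    proof (rule coord_functionals_indep[OF _ a0])
      fix l i assume "l \<in> rows_F" "i < k"
      then show "(\<Sum>a\<in>?P. \<gamma> a * (G $$ (i, a div \<beta>) * Q $$ (l, a))) = 0"
        using dep unfolding r_def by auto
    qed
  qed
  then obtain x where "\<forall>a\<in>?P. (\<Sum>d\<in>?D. r a d * x d) = v a" ..
  then have "\<forall>a\<in>?P. coord (mat (\<alpha> * m) k x) a = v a"
    by (simp add: coord_mat r_def)
  then show ?thesis
    by (intro bexI[of _ "mat (\<alpha> * m) k x"]) auto
qed

lemma colsupp_query:
  "colsupp (submatrix Q rows_F (psi \<beta> N))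
    = {c. c < \<beta> * card N \<and> pick (psi \<beta> N) c \<in> nonzero_cols Q rows_F (psi \<beta> N)}"
  using colsupp_submatrix[OF Q_dim rows_subset psi_subset_lessThan[OF N(1)]]
  by (simp add: card_psi[OF finite_N])

lemma coord_pick_off_colsupp:
  assumes "c < \<beta> * card N" "c \<notin> colsupp (submatrix Q rows_F (psi \<beta> N))"
  shows "coord X (pick (psi \<beta> N) c) = 0"
proof (rule coord_eq_0)
  have "pick (psi \<beta> N) c \<in> psi \<beta> N"
    using assms(1) by (simp add: pick_in_set card_psi[OF finite_N])
  then show "Q $$ (l, pick (psi \<beta> N) c) = 0" if "l \<in> rows_F" for l
    using assms that by (auto simp: colsupp_query nonzero_cols_def)
qed

lemma answer_image:
  "(\<lambda>X. answer G Q X \<alpha> \<beta> F N) ` carrier_mat (\<alpha> * m) k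
    = {w \<in> carrier_vec (\<beta> * card N).
        \<forall>c<\<beta> * card N. c \<notin> colsupp (submatrix Q rows_F (psi \<beta> N)) \<longrightarrow> w $ c = 0}"
    (is "?f ` ?C = ?V")
proof (intro equalityI subsetI)
  let ?J = "psi \<beta> N"
  show "w \<in> ?V" if "w \<in> ?f ` ?C" for w
    using that coord_pick_off_colsupp by (auto simp: answer_eq)
  show "w \<in> ?f ` ?C" if w: "w \<in> ?V" for w
  proof -
    obtain X where X: "X \<in> ?C" "\<forall>a\<in>nonzero_cols Q rows_F ?J. coord X a = w $ card {x \<in> ?J. x < a}"
      using coord_surj[of "\<lambda>a. w $ card {x \<in> ?J. x < a}"] by blast
    have wc: "w $ c = coord X (pick ?J c)" if c: "c < \<beta> * card N" for c
    proof (cases "c \<in> colsupp (submatrix Q rows_F ?J)")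
      case True
      then have "coord X (pick ?J c) = w $ card {x \<in> ?J. x < pick ?J c}"
        using X(2) by (simp add: colsupp_query)
      also have "card {x \<in> ?J. x < pick ?J c} = c"
        using c by (simp add: card_pick card_psi[OF finite_N])
      finally show ?thesis ..
    next
      case False
      then show ?thesis
        using w c coord_pick_off_colsupp by simp
    qed
    have "?f X = w"
    proof (rule eq_vecI)
      fix c assume "c < dim_vec w"
      then have "c < \<beta> * card N"
        using w by auto
      then show "?f X $ c = w $ c"
        using X(1) wc by (simp add: answer_eq)
    qed (use X(1) w in \<open>auto simp: answer_eq\<close>)
    then show ?thesis
      using X(1) by blast
  qed
qed

end

theorem lemma8:
  fixes G :: "'a::{field,finite} mat" and Q :: "'a mat"
    and n k t m \<alpha> \<beta> :: nat
  assumes mds: "mds_generator G n k"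
    and k_pos: "1 \<le> k"
    and t_pos: "1 \<le> t"
    and Q_dim: "Q \<in> carrier_mat (\<alpha> * m) (\<beta> * n)"
    and Q_cond: "\<And>T F. T \<subseteq> {0..<n} \<Longrightarrow> card T = t \<Longrightarrow> F \<subseteq> {0..<m} \<Longrightarrow> F \<noteq> {} \<Longrightarrow>
        mat_rank (submatrix Q (psi \<alpha> F) (psi \<beta> T))
          = card (colsupp (submatrix Q (psi \<alpha> F) (psi \<beta> T)))"
    and F: "F \<subseteq> {0..<m}" "F \<noteq> {}"
    and N: "N \<subseteq> {0..<n}" "card N = k + t - 1"
  shows "entropy_unif (real (card (UNIV :: 'a set))) (carrier_mat (\<alpha> * m) k)
           (\<lambda>X. answer G Q X \<alpha> \<beta> F N)
         = real (card (colsupp (submatrix Q (psi \<alpha> F) (psi \<beta> N))))"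
proof -
  interpret mds_retrieval G Q n k t m \<alpha> \<beta> F N
    using assms by unfold_locales
  let ?C = "carrier_mat (\<alpha> * m) k" and ?f = "\<lambda>X. answer G Q X \<alpha> \<beta> F N"
    and ?Z = "colsupp (submatrix Q (psi \<alpha> F) (psi \<beta> N))" and ?q = "card (UNIV :: 'a set)"
  have q: "2 \<le> ?q"
    by (rule card_UNIV_field_ge_2)
  have "entropy_unif ?q ?C ?f = log ?q (card (?f ` ?C))"
  proof (rule entropy_unif_const_fibers)
    show "card {Y \<in> ?C. ?f Y = ?f X} = card {Y \<in> ?C. ?f Y = ?f (0\<^sub>m (\<alpha> * m) k)}" if "X \<in> ?C" for X
      by (rule card_fiber_additive[OF answer_carrier answer_add that])
  qed (use finite_carrier_mat q in auto)
  also have "card (?f ` ?C) = ?q ^ card ?Z"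
    unfolding answer_image by (rule card_vecs_supported_on) (auto simp: colsupp_query)
  finally show ?thesis
    using q by (simp add: log_nat_power)
qed

end
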